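(* Consider a Markov decision process with finite state space $\mathcal{S}$ such that, for every allowed policy $\pi$, the induced Markov chain on $\mathcal{S}$ is ergodic and reversible with respect to its stationary distribution $\mathfrak{p}_\pi$. Let $\mathfrak{p}_{\min}=\min_{s\in\mathcal{S},\pi}\mathfrak{p}_\pi(s)$, and let $\lambda_\star<1$ be an upper bound, valid for every allowed policy $\pi$, on the second largest eigenvalue of the one-step transition matrix $P_\pi=[\mathbb{P}(s_{t+1}=j\mid s_t=i,\pi)]_{ij}$. Let $\epsilon>0$ and $\gamma\in(0,1)$. If \[ \gamma\ \ge\ \frac{1-\mathfrak{p}_{\min}\,\epsilon}{1-\lambda_\star\,\mathfrak{p}_{\min}\,\epsilon}, \] then $\|\Delta_{z,z'}\|_{\mathrm{TV}}\le\epsilon$ for all $z,z'\in\mathcal{S}$ and every allowed policy $\pi$.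
   Context: For a policy $\pi$ and discount factor $\gamma$, the discounted state occupation measure from $z$ is $\rho_z(s)=(1-\gamma)\sum_{t\ge0}\gamma^t\,\mathbb{P}(s_t=s\mid s_0=z,\pi)$, and $\Delta_{z,z'}=\rho_z-\rho_{z'}$ with total variation norm $\|\Delta_{z,z'}\|_{\mathrm{TV}}=\tfrac12\sum_{s\in\mathcal{S}}|\Delta_{z,z'}(s)|$. Reversibility means $\mathfrak{p}_\pi(z)\,\mathbb{P}(s_{1}=z'\mid s_0=z,\pi)=\mathfrak{p}_\pi(z')\,\mathbb{P}(s_{1}=z\mid s_0=z',\pi)$ for all $z,z'$. The "second largest eigenvalue" means the largest eigenvalue of $P_\pi$ other than the eigenvalue $1$ (counted once); all eigenvalues of $P_\pi$ are real by reversibility. *)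

theory Defs
  imports "HOL-Analysis.Analysis"
begin

text \<open>Finite MDP: states 'S (finite), actions 'A (finite), transition kernel
  T s a s' = P(s_{t+1} = s' | s_t = s, a_t = a); a (stochastic, stationary) policy
  pol s a = P(a_t = a | s_t = s).\<close>

definition is_distribution :: "('a::finite \<Rightarrow> real) \<Rightarrow> bool" where
  "is_distribution q \<longleftrightarrow> (\<forall>x. 0 \<le> q x) \<and> (\<Sum>x\<in>UNIV. q x) = 1"

definition stochastic :: "('a::finite \<Rightarrow> 'a \<Rightarrow> real) \<Rightarrow> bool" where
  "stochastic P \<longleftrightarrow> (\<forall>i. is_distribution (P i))"

definition induced_chain ::
  "('S::finite \<Rightarrow> 'A::finite \<Rightarrow> 'S \<Rightarrow> real) \<Rightarrow> ('S \<Rightarrow> 'A \<Rightarrow> real) \<Rightarrow> 'S \<Rightarrow> 'S \<Rightarrow> real" where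
  "induced_chain T pol i j = (\<Sum>a\<in>UNIV. pol i a * T i a j)"

fun nstep :: "('S::finite \<Rightarrow> 'S \<Rightarrow> real) \<Rightarrow> nat \<Rightarrow> 'S \<Rightarrow> 'S \<Rightarrow> real" where
  "nstep P 0 i j = (if i = j then 1 else 0)"
| "nstep P (Suc n) i j = (\<Sum>k\<in>UNIV. nstep P n i k * P k j)"

definition irreducible_chain :: "('S::finite \<Rightarrow> 'S \<Rightarrow> real) \<Rightarrow> bool" where
  "irreducible_chain P \<longleftrightarrow> (\<forall>i j. \<exists>n. nstep P n i j > 0)"

definition period :: "('S::finite \<Rightarrow> 'S \<Rightarrow> real) \<Rightarrow> 'S \<Rightarrow> nat" where
  "period P i = Gcd {n. n > 0 \<and> nstep P n i i > 0}"

definition aperiodic_chain :: "('S::finite \<Rightarrow> 'S \<Rightarrow> real) \<Rightarrow> bool" where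
  "aperiodic_chain P \<longleftrightarrow> (\<forall>i. period P i = 1)"

definition ergodic_chain :: "('S::finite \<Rightarrow> 'S \<Rightarrow> real) \<Rightarrow> bool" where
  "ergodic_chain P \<longleftrightarrow> stochastic P \<and> irreducible_chain P \<and> aperiodic_chain P"

definition is_stationary :: "('S::finite \<Rightarrow> 'S \<Rightarrow> real) \<Rightarrow> ('S \<Rightarrow> real) \<Rightarrow> bool" where
  "is_stationary P p \<longleftrightarrow> is_distribution p \<and> (\<forall>j. (\<Sum>i\<in>UNIV. p i * P i j) = p j)"

text \<open>The stationary distribution (unique for ergodic chains).\<close>
definition stationary_dist :: "('S::finite \<Rightarrow> 'S \<Rightarrow> real) \<Rightarrow> 'S \<Rightarrow> real" where
  "stationary_dist P = (THE p. is_stationary P p)"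

definition reversible_wrt :: "('S::finite \<Rightarrow> 'S \<Rightarrow> real) \<Rightarrow> ('S \<Rightarrow> real) \<Rightarrow> bool" where
  "reversible_wrt P p \<longleftrightarrow> (\<forall>z z'. p z * P z z' = p z' * P z' z)"

definition trans_matrix :: "('S::finite \<Rightarrow> 'S \<Rightarrow> real) \<Rightarrow> real^'S^'S" where
  "trans_matrix P = (\<chi> i j. P i j)"

definition is_eigenvalue :: "real^'n^'n \<Rightarrow> real \<Rightarrow> bool" where
  "is_eigenvalue M \<mu> \<longleftrightarrow> (\<exists>v. v \<noteq> 0 \<and> M *v v = \<mu> *\<^sub>R v)"

definition occupation :: "('S::finite \<Rightarrow> 'S \<Rightarrow> real) \<Rightarrow> real \<Rightarrow> 'S \<Rightarrow> 'S \<Rightarrow> real" where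
  "occupation P \<gamma> z s = (1 - \<gamma>) * (\<Sum>t. \<gamma> ^ t * nstep P t z s)"

definition tv_diff :: "('S::finite \<Rightarrow> 'S \<Rightarrow> real) \<Rightarrow> real \<Rightarrow> 'S \<Rightarrow> 'S \<Rightarrow> real" where
  "tv_diff P \<gamma> z z' = (1/2) * (\<Sum>s\<in>UNIV. \<bar>occupation P \<gamma> z s - occupation P \<gamma> z' s\<bar>)"

end

theory Submission
  imports Defs
begin

(*
  Let d = rho_z - rho_z'. It solves the resolvent equation
  d = (1 - gamma) (delta_z - delta_z') + gamma d P and has total mass 0. In the coordinates
  y_s = d_s / sqrt (p_s) the transition matrix becomes the symmetric matrix D^(1/2) P D^(-1/2),
  D = diag p, and mass 0 becomes orthogonality to sqrt p. On that hyperplane the Rayleigh quotient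
  is at most lam: its maximiser is an eigenvector of P whose eigenvalue is not 1, because the only
  harmonic functions of an irreducible chain are the constants. Hence
  (1 - gamma lam) |y| <= (1 - gamma) |h| with |h|^2 <= 1/p_z + 1/p_z' <= 2/p_min, while
  Cauchy-Schwarz gives 2 |Delta|_TV <= |y|. Finally the hypothesis on gamma yields
  (1 - gamma) / (1 - gamma lam) <= p_min eps, and sqrt (2/p_min) <= 2/p_min.
*)

section \<open>Stationary distributions of irreducible chains\<close>

lemma nstep_nonneg:
  assumes "stochastic P"
  shows "0 \<le> nstep P n i j"
  using assms
  by (induction n arbitrary: j) (auto simp: stochastic_def is_distribution_def intro!: sum_nonneg)

lemma sum_nstep:
  assumes "stochastic P"
  shows "(\<Sum>j\<in>UNIV. nstep P n i j) = 1"
proof (induction n)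
  case (Suc n)
  have "(\<Sum>j\<in>UNIV. nstep P (Suc n) i j) = (\<Sum>k\<in>UNIV. nstep P n i k * (\<Sum>j\<in>UNIV. P k j))"
    by (simp add: sum_distrib_left) (rule sum.swap)
  also have "\<dots> = 1"
    using Suc assms by (simp add: stochastic_def is_distribution_def)
  finally show ?case .
qed simp

lemma nstep_le_1:
  assumes "stochastic P"
  shows "nstep P n i j \<le> 1"
proof -
  have "nstep P n i j \<le> (\<Sum>j\<in>UNIV. nstep P n i j)"
    by (rule member_le_sum) (auto simp: nstep_nonneg[OF assms])
  then show ?thesis
    using sum_nstep[OF assms] by simp
qed

lemma nstep_harmonic:
  assumes "\<And>i. (\<Sum>j\<in>UNIV. P i j * x j) = x i"
  shows "(\<Sum>j\<in>UNIV. nstep P n i j * x j) = x i"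
proof (induction n arbitrary: i)
  case (Suc n)
  have "(\<Sum>j\<in>UNIV. nstep P (Suc n) i j * x j) = (\<Sum>k\<in>UNIV. nstep P n i k * (\<Sum>j\<in>UNIV. P k j * x j))"
    by (simp add: sum_distrib_left sum_distrib_right mult.assoc) (rule sum.swap)
  then show ?case
    using Suc assms by simp
qed (simp add: of_bool_def[symmetric])

lemma nstep_invariant:
  assumes "\<And>j. (\<Sum>i\<in>UNIV. r i * P i j) = r j"
  shows "(\<Sum>i\<in>UNIV. r i * nstep P n i j) = r j"
proof (induction n arbitrary: j)
  case (Suc n)
  have "(\<Sum>i\<in>UNIV. r i * nstep P (Suc n) i j) = (\<Sum>k\<in>UNIV. (\<Sum>i\<in>UNIV. r i * nstep P n i k) * P k j)"
    by (simp add: sum_distrib_left sum_distrib_right mult.assoc) (rule sum.swap)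
  then show ?case
    using Suc assms by simp
qed (simp add: of_bool_def[symmetric])

lemma harmonic_const:
  assumes P: "stochastic P" "irreducible_chain P"
    and harmonic: "\<And>i. (\<Sum>j\<in>UNIV. P i j * x j) = x i"
  shows "x j = x k"
proof -
  have "Max (range x) \<in> range x"
    by (rule Max_in) auto
  then obtain i0 where i0: "x i0 = Max (range x)"
    by (metis imageE)
  have le: "x l \<le> x i0" for l
    unfolding i0 by (rule Max_ge) auto
  have eq: "x l = x i0" for l
  proof -
    obtain n where n: "nstep P n i0 l > 0"
      using P(2) unfolding irreducible_chain_def by blast
    have "(\<Sum>m\<in>UNIV. nstep P n i0 m * (x i0 - x m))
        = x i0 * (\<Sum>m\<in>UNIV. nstep P n i0 m) - (\<Sum>m\<in>UNIV. nstep P n i0 m * x m)"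
      by (simp add: right_diff_distrib sum_subtractf sum_distrib_left mult.commute)
    also have "\<dots> = 0"
      using sum_nstep[OF P(1)] nstep_harmonic[OF harmonic] by simp
    finally have "\<forall>m\<in>UNIV. nstep P n i0 m * (x i0 - x m) = 0"
      by (subst sum_nonneg_eq_0_iff[symmetric]) (auto simp: le nstep_nonneg[OF P(1)])
    then have "nstep P n i0 l * (x i0 - x l) = 0"
      by blast
    then show ?thesis
      using n by simp
  qed
  show ?thesis
    using eq[of j] eq[of k] by simp
qed

lemma invariant_pos:
  assumes P: "stochastic P" "irreducible_chain P"
    and invariant: "\<And>j. (\<Sum>i\<in>UNIV. r i * P i j) = r j"
    and nonneg: "\<And>i. 0 \<le> r i" and pos: "r i0 > 0"
  shows "r j > 0"
proof -
  obtain n where n: "nstep P n i0 j > 0"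
    using P(2) unfolding irreducible_chain_def by blast
  have "0 < r i0 * nstep P n i0 j"
    using pos n by simp
  also have "\<dots> \<le> (\<Sum>i\<in>UNIV. r i * nstep P n i j)"
    by (rule member_le_sum[where f = "\<lambda>i. r i * nstep P n i j"]) (auto simp: nonneg nstep_nonneg[OF P(1)])
  also have "\<dots> = r j"
    by (rule nstep_invariant[OF invariant])
  finally show ?thesis .
qed

lemma stationary_pos:
  assumes P: "stochastic P" "irreducible_chain P" and q: "is_stationary P q"
  shows "q j > 0"
proof -
  have nonneg: "\<And>i. 0 \<le> q i" and sum: "(\<Sum>i\<in>UNIV. q i) = 1"
    and invariant: "\<And>j. (\<Sum>i\<in>UNIV. q i * P i j) = q j"
    using q unfolding is_stationary_def is_distribution_def by auto
  obtain i0 where "q i0 \<noteq> 0"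
    using sum by (metis sum.neutral zero_neq_one)
  then have "q i0 > 0"
    using nonneg[of i0] by simp
  then show ?thesis
    using invariant_pos[OF P invariant nonneg] by blast
qed

lemma stationary_unique:
  assumes P: "stochastic P" "irreducible_chain P"
    and p: "is_stationary P p" and q: "is_stationary P q"
  shows "q = p"
proof -
  have p_pos: "\<And>i. p i > 0"
    using stationary_pos[OF P p] .
  define c where "c = Min (range (\<lambda>i. q i / p i))"
  have "c \<in> range (\<lambda>i. q i / p i)"
    unfolding c_def by (rule Min_in) auto
  then obtain i1 where i1: "c = q i1 / p i1"
    by blast
  define r where "r i = q i - c * p i" for i
  have r_nonneg: "0 \<le> r i" for i
  proof -
    have "c \<le> q i / p i"
      unfolding c_def by (rule Min_le) auto
    then show ?thesis
      using p_pos[of i] by (simp add: r_def field_simps)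
  qed
  have r_invariant: "(\<Sum>i\<in>UNIV. r i * P i j) = r j" for j
  proof -
    have "(\<Sum>i\<in>UNIV. r i * P i j) = (\<Sum>i\<in>UNIV. q i * P i j) - c * (\<Sum>i\<in>UNIV. p i * P i j)"
      by (simp add: r_def left_diff_distrib sum_subtractf sum_distrib_left mult.assoc)
    then show ?thesis
      using p q by (simp add: r_def is_stationary_def)
  qed
  have "r i = 0" for i
  proof (rule ccontr)
    assume "r i \<noteq> 0"
    then have "r i > 0"
      using r_nonneg[of i] by simp
    then have "r i1 > 0"
      by (rule invariant_pos[OF P r_invariant r_nonneg])
    then show False
      using p_pos[of i1] by (simp add: r_def i1)
  qed
  then have q_eq: "q i = c * p i" for i
    by (simp add: r_def)
  have "1 = c"
    using p q by (simp add: q_eq is_stationary_def is_distribution_def flip: sum_distrib_left)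
  then show ?thesis
    using q_eq by auto
qed

lemma transpose_kernel_nontrivial:
  fixes A :: "real^'n^'n"
  assumes "A *v x = 0" "x \<noteq> 0"
  obtains y where "transpose A *v y = 0" "y \<noteq> 0"
proof -
  have "\<not> invertible A"
    using assms by (auto simp: invertible_left_inverse matrix_left_invertible_ker)
  then have "\<not> invertible (transpose A)"
    using transpose_invertible transpose_transpose by metis
  then show ?thesis
    using that by (auto simp: invertible_left_inverse matrix_left_invertible_ker)
qed

lemma invariant_nonzero_exists:
  assumes "stochastic P"
  obtains x k where "x k \<noteq> 0" "\<And>j. (\<Sum>i\<in>UNIV. x i * P i j) = x j"
proof -
  define A where "A = trans_matrix P - mat 1"
  have "A *v (\<chi> i. 1) = 0"
    using assms by (simp add: A_def trans_matrix_def matrix_vector_mult_def mat_def vec_eq_iff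
        sum_subtractf of_bool_def[symmetric] stochastic_def is_distribution_def)
  then obtain y where y: "transpose A *v y = 0" "y \<noteq> 0"
    using transpose_kernel_nontrivial by (metis zero_index vec_lambda_beta one_neq_zero)
  have "(transpose A *v y) $ j = (\<Sum>i\<in>UNIV. y $ i * P i j) - y $ j" for j
    by (simp add: A_def trans_matrix_def transpose_def matrix_vector_mult_def mat_def
        of_bool_def[symmetric] mult.commute)
      (simp add: right_diff_distrib sum_subtractf)
  then have "(\<Sum>i\<in>UNIV. y $ i * P i j) = y $ j" for j
    using y(1) by simp
  moreover obtain k where "y $ k \<noteq> 0"
    using y(2) by (auto simp: vec_eq_iff)
  ultimately show ?thesis
    using that by blast
qed

lemma invariant_abs:
  assumes P: "stochastic P" and invariant: "\<And>j. (\<Sum>i\<in>UNIV. x i * P i j) = x j"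
  shows "(\<Sum>i\<in>UNIV. \<bar>x i\<bar> * P i j) = \<bar>x j\<bar>"
proof -
  have sub: "\<bar>x j\<bar> \<le> (\<Sum>i\<in>UNIV. \<bar>x i\<bar> * P i j)" for j
  proof -
    have "\<bar>x j\<bar> \<le> (\<Sum>i\<in>UNIV. \<bar>x i * P i j\<bar>)"
      unfolding invariant[of j, symmetric] by (rule sum_abs)
    then show ?thesis
      using P by (simp add: abs_mult stochastic_def is_distribution_def)
  qed
  have "(\<Sum>j\<in>UNIV. \<Sum>i\<in>UNIV. \<bar>x i\<bar> * P i j) = (\<Sum>i\<in>UNIV. \<bar>x i\<bar> * (\<Sum>j\<in>UNIV. P i j))"
    by (simp add: sum_distrib_left) (rule sum.swap)
  then have "(\<Sum>j\<in>UNIV. (\<Sum>i\<in>UNIV. \<bar>x i\<bar> * P i j) - \<bar>x j\<bar>) = 0"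
    using P by (simp add: sum_subtractf stochastic_def is_distribution_def)
  then have "\<forall>j\<in>UNIV. (\<Sum>i\<in>UNIV. \<bar>x i\<bar> * P i j) - \<bar>x j\<bar> = 0"
    by (subst sum_nonneg_eq_0_iff[symmetric]) (auto simp: sub)
  then show ?thesis
    by simp
qed

lemma stationary_exists:
  assumes P: "stochastic P"
  obtains q where "is_stationary P q"
proof -
  obtain x k where "x k \<noteq> 0" and invariant: "\<And>j. (\<Sum>i\<in>UNIV. x i * P i j) = x j"
    using invariant_nonzero_exists[OF P] by blast
  define S where "S = (\<Sum>i\<in>UNIV. \<bar>x i\<bar>)"
  have "0 < \<bar>x k\<bar>"
    using \<open>x k \<noteq> 0\<close> by simp
  also have "\<dots> \<le> S"
    unfolding S_def by (rule member_le_sum) auto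
  finally have "S > 0" .
  have "is_stationary P (\<lambda>i. \<bar>x i\<bar> / S)"
    using \<open>S > 0\<close> invariant_abs[OF P invariant]
    by (simp add: is_stationary_def is_distribution_def S_def flip: sum_divide_distrib)
  then show ?thesis
    using that by blast
qed

lemma is_stationary_stationary_dist:
  assumes "stochastic P" "irreducible_chain P"
  shows "is_stationary P (stationary_dist P)"
proof -
  obtain q where q: "is_stationary P q"
    using stationary_exists[OF assms(1)] .
  show ?thesis
    unfolding stationary_dist_def by (rule theI[of _ q]) (use q stationary_unique[OF assms] in auto)
qed

section \<open>Discounted occupation measures\<close>

lemma summable_discounted_nstep:
  assumes "stochastic P" "0 \<le> \<gamma>" "\<gamma> < 1"
  shows "summable (\<lambda>t. \<gamma> ^ t * nstep P t z s)"
proof (rule summable_comparison_test)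
  show "\<exists>N. \<forall>t\<ge>N. norm (\<gamma> ^ t * nstep P t z s) \<le> \<gamma> ^ t"
    using assms nstep_nonneg[OF assms(1)] nstep_le_1[OF assms(1)]
    by (auto simp: abs_mult intro!: mult_left_le)
  show "summable (\<lambda>t. \<gamma> ^ t)"
    using assms by (simp add: summable_geometric)
qed

lemma occupation_eq:
  assumes "stochastic P" "0 \<le> \<gamma>" "\<gamma> < 1"
  shows "occupation P \<gamma> z s
    = (1 - \<gamma>) * of_bool (z = s) + \<gamma> * (\<Sum>k\<in>UNIV. occupation P \<gamma> z k * P k s)"
proof -
  note summable = summable_discounted_nstep[OF assms]
  have "(\<Sum>t. \<gamma> ^ t * nstep P t z s) - of_bool (z = s) = (\<Sum>t. \<gamma> ^ Suc t * nstep P (Suc t) z s)"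
    using suminf_split_head[OF summable] by (simp add: of_bool_def)
  also have "\<dots> = (\<Sum>t. \<Sum>k\<in>UNIV. (\<gamma> * P k s) * (\<gamma> ^ t * nstep P t z k))"
    by (simp add: sum_distrib_left mult_ac)
  also have "\<dots> = (\<Sum>k\<in>UNIV. \<Sum>t. (\<gamma> * P k s) * (\<gamma> ^ t * nstep P t z k))"
    by (rule suminf_sum) (intro summable_mult summable)
  also have "\<dots> = \<gamma> * (\<Sum>k\<in>UNIV. (\<Sum>t. \<gamma> ^ t * nstep P t z k) * P k s)"
    by (simp add: suminf_mult summable sum_distrib_left mult_ac)
  finally show ?thesis
    by (simp add: occupation_def algebra_simps sum_distrib_left)
qed

lemma sum_occupation:
  assumes "stochastic P" "0 \<le> \<gamma>" "\<gamma> < 1"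
  shows "(\<Sum>s\<in>UNIV. occupation P \<gamma> z s) = 1"
proof -
  have "(\<Sum>s\<in>UNIV. \<Sum>k\<in>UNIV. occupation P \<gamma> z k * P k s)
      = (\<Sum>k\<in>UNIV. occupation P \<gamma> z k * (\<Sum>s\<in>UNIV. P k s))"
    by (simp add: sum_distrib_left) (rule sum.swap)
  then have "(\<Sum>s\<in>UNIV. occupation P \<gamma> z s) = (1 - \<gamma>) + \<gamma> * (\<Sum>s\<in>UNIV. occupation P \<gamma> z s)"
    using assms(1) by (subst (1) occupation_eq[OF assms])
      (simp add: sum.distrib of_bool_def stochastic_def is_distribution_def flip: sum_distrib_left)
  then have "(1 - \<gamma>) * (\<Sum>s\<in>UNIV. occupation P \<gamma> z s) = 1 - \<gamma>"
    by (simp add: algebra_simps)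
  then show ?thesis
    using assms(3) by simp
qed

lemma occupation_diff_eq:
  assumes "stochastic P" "0 \<le> \<gamma>" "\<gamma> < 1"
  shows "occupation P \<gamma> z s - occupation P \<gamma> z' s
    = (1 - \<gamma>) * (of_bool (z = s) - of_bool (z' = s))
      + \<gamma> * (\<Sum>k\<in>UNIV. (occupation P \<gamma> z k - occupation P \<gamma> z' k) * P k s)"
proof -
  note occ = occupation_eq[OF assms]
  have "occupation P \<gamma> z s - occupation P \<gamma> z' s
      = ((1 - \<gamma>) * of_bool (z = s) + \<gamma> * (\<Sum>k\<in>UNIV. occupation P \<gamma> z k * P k s))
        - ((1 - \<gamma>) * of_bool (z' = s) + \<gamma> * (\<Sum>k\<in>UNIV. occupation P \<gamma> z' k * P k s))"
    by (rule arg_cong2[where f = minus]) (rule occ)+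
  then show ?thesis
    by (simp add: algebra_simps sum_subtractf)
qed

lemma mult_less_1_of_le_1:
  fixes \<gamma> lam :: real
  assumes "0 \<le> \<gamma>" "\<gamma> \<le> 1" "lam < 1"
  shows "\<gamma> * lam < 1"
proof (cases "lam \<le> 0")
  case True
  then show ?thesis
    using assms mult_nonneg_nonpos[of \<gamma> lam] by linarith
next
  case False
  then have "\<gamma> * lam \<le> 1 * lam"
    using assms by (intro mult_right_mono) auto
  then show ?thesis
    using assms by simp
qed

lemma discount_ratio_le:
  fixes lam \<gamma> \<delta> :: real
  assumes "lam < 1" "0 \<le> \<gamma>" "\<gamma> * lam < 1" "0 < \<delta>"
    and \<gamma>_ge: "(1 - \<delta>) / (1 - lam * \<delta>) \<le> \<gamma>"
  shows "(1 - \<gamma>) / (1 - \<gamma> * lam) \<le> \<delta>"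
proof (cases "lam * \<delta> < 1")
  case True
  then have "1 - \<delta> \<le> \<gamma> * (1 - lam * \<delta>)"
    using \<gamma>_ge by (simp add: pos_divide_le_eq)
  then have "1 - \<gamma> \<le> \<delta> * (1 - \<gamma> * lam)"
    by (simp add: algebra_simps)
  then show ?thesis
    using assms(3) by (simp add: pos_divide_le_eq)
next
  case False
  \<comment> \<open>Then the hypothesis on \<gamma> is void (its denominator is not positive), but \<delta> > 1.\<close>
  have "lam * \<delta> < 1 * \<delta>"
    using assms(1,4) by (intro mult_strict_right_mono)
  then have "1 < \<delta>"
    using False by linarith
  moreover have "\<gamma> * lam \<le> \<gamma> * 1"
    using assms(1,2) by (intro mult_left_mono) auto
  then have "(1 - \<gamma>) / (1 - \<gamma> * lam) \<le> 1"
    using assms(3) by (simp add: pos_divide_le_eq)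
  ultimately show ?thesis
    by linarith
qed

section \<open>Rayleigh quotients of self-adjoint maps\<close>

lemma linear_coeff_eq_0_if_quadratic_nonneg:
  fixes a c :: real
  assumes "\<And>t. 0 \<le> t * a + t\<^sup>2 * c"
  shows "a = 0"
proof (rule ccontr)
  assume "a \<noteq> 0"
  define k where "k = \<bar>c\<bar> + 1"
  have "k > 0" "c < k"
    by (auto simp: k_def)
  have "(- a / k) * a + (- a / k)\<^sup>2 * c = a\<^sup>2 * (c - k) / k\<^sup>2"
    using \<open>k > 0\<close> by (simp add: power2_eq_square field_simps)
  also have "\<dots> < 0"
    using \<open>a \<noteq> 0\<close> \<open>k > 0\<close> \<open>c < k\<close> by (intro divide_neg_pos mult_pos_neg) auto
  finally show False
    using assms[of "- a / k"] by linarith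
qed

lemma rayleigh_maximiser_eigenvector:
  fixes f :: "'a::euclidean_space \<Rightarrow> 'a"
  assumes lin: "linear f" and adj: "\<And>x y. f x \<bullet> y = x \<bullet> f y"
    and V: "subspace V" and inv: "f ` V \<subseteq> V"
    and v: "v \<in> V" "v \<bullet> v = 1"
    and bound: "\<And>x. x \<in> V \<Longrightarrow> x \<bullet> f x \<le> (v \<bullet> f v) * (x \<bullet> x)"
  shows "f v = (v \<bullet> f v) *\<^sub>R v"
proof -
  define M where "M = v \<bullet> f v"
  define w where "w = M *\<^sub>R v - f v"
  have "w \<in> V"
    unfolding w_def using v inv V by (intro subspace_diff subspace_scale) auto
  have w_w: "w \<bullet> w = M * (v \<bullet> w) - w \<bullet> f v"
    by (subst (1) w_def) (simp add: inner_diff_right inner_commute)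
  have "0 \<le> t * (2 * (w \<bullet> w)) + t\<^sup>2 * (M * (w \<bullet> w) - w \<bullet> f w)" for t
  proof -
    have "v + t *\<^sub>R w \<in> V"
      using V v \<open>w \<in> V\<close> by (intro subspace_add subspace_scale) auto
    have quadratic:
      "(v + t *\<^sub>R w) \<bullet> f (v + t *\<^sub>R w) = M + 2 * t * (w \<bullet> f v) + t\<^sup>2 * (w \<bullet> f w)"
      using adj[of w v]
      by (simp add: linear_add[OF lin] linear_scale[OF lin] inner_add M_def inner_commute
          power2_eq_square algebra_simps)
    have norm2: "(v + t *\<^sub>R w) \<bullet> (v + t *\<^sub>R w) = 1 + 2 * t * (v \<bullet> w) + t\<^sup>2 * (w \<bullet> w)"
      using v by (simp add: inner_add inner_commute power2_eq_square algebra_simps)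
    have "0 \<le> M * (1 + 2 * t * (v \<bullet> w) + t\<^sup>2 * (w \<bullet> w))
        - (M + 2 * t * (w \<bullet> f v) + t\<^sup>2 * (w \<bullet> f w))"
      using bound[OF \<open>v + t *\<^sub>R w \<in> V\<close>] unfolding quadratic norm2 M_def by simp
    also have "\<dots> = t * (2 * (w \<bullet> w)) + t\<^sup>2 * (M * (w \<bullet> w) - w \<bullet> f w)"
      by (simp only: w_w) (simp add: algebra_simps)
    finally show ?thesis .
  qed
  then have "w = 0"
    using linear_coeff_eq_0_if_quadratic_nonneg by fastforce
  then show ?thesis
    by (simp add: w_def M_def)
qed

lemma self_adjoint_rayleigh_max_eigenvector:
  fixes f :: "'a::euclidean_space \<Rightarrow> 'a"
  assumes lin: "linear f" and adj: "\<And>x y. f x \<bullet> y = x \<bullet> f y"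
    and V: "subspace V" and inv: "f ` V \<subseteq> V" and nontriv: "V \<noteq> {0}"
  obtains v M where "v \<in> V" "v \<noteq> 0" "f v = M *\<^sub>R v"
    and "\<And>x. x \<in> V \<Longrightarrow> x \<bullet> f x \<le> M * (x \<bullet> x)"
proof -
  define K where "K = V \<inter> sphere 0 1"
  have normalize_in_K: "x /\<^sub>R norm x \<in> K" if "x \<in> V" "x \<noteq> 0" for x
    using that V by (simp add: K_def subspace_scale)
  have "compact K"
    unfolding K_def by (intro closed_Int_compact closed_subspace V compact_sphere)
  moreover have "K \<noteq> {}"
    using nontriv V normalize_in_K subspace_0 by blast
  moreover have "continuous_on K (\<lambda>x. x \<bullet> f x)"
    using lin by (intro continuous_intros linear_continuous_on linear_conv_bounded_linear[THEN iffD1])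
  ultimately obtain v where "v \<in> K" and v_max: "\<And>x. x \<in> K \<Longrightarrow> x \<bullet> f x \<le> v \<bullet> f v"
    using continuous_attains_sup by metis
  have v: "v \<in> V" "v \<bullet> v = 1"
    using \<open>v \<in> K\<close> by (auto simp: K_def dot_square_norm)
  have bound: "x \<bullet> f x \<le> (v \<bullet> f v) * (x \<bullet> x)" if "x \<in> V" for x
  proof (cases "x = 0")
    case False
    have "(x /\<^sub>R norm x) \<bullet> f (x /\<^sub>R norm x) \<le> v \<bullet> f v"
      by (rule v_max[OF normalize_in_K[OF that False]])
    then show ?thesis
      using False by (simp add: linear_scale[OF lin] dot_square_norm field_simps power2_eq_square)
  qed (simp add: linear_0[OF lin])
  have "v \<noteq> 0"
    using v by auto
  then show ?thesis
    using that[of v "v \<bullet> f v"] v bound rayleigh_maximiser_eigenvector[OF lin adj V inv v bound] by blast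
qed

section \<open>Reversible chains\<close>

locale reversible_chain =
  fixes P :: "'S::finite \<Rightarrow> 'S \<Rightarrow> real" and p :: "'S \<Rightarrow> real"
  assumes stochastic: "stochastic P" and irreducible: "irreducible_chain P"
    and stationary: "is_stationary P p" and reversible: "reversible_wrt P p"
begin

lemma p_pos: "0 < p i"
  using stationary_pos[OF stochastic irreducible stationary] .

lemma p_nonzero [simp]: "p i \<noteq> 0"
  using p_pos[of i] by simp

lemma sum_p: "(\<Sum>i\<in>UNIV. p i) = 1"
  using stationary by (simp add: is_stationary_def is_distribution_def)

lemma p_le_1: "p i \<le> 1"
  using member_le_sum[of i UNIV p] p_pos by (simp add: less_imp_le sum_p)

definition sqrt_p :: "real^'S" where
  "sqrt_p = (\<chi> i. sqrt (p i))"

definition symmetrized :: "real^'S^'S" where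
  "symmetrized = (\<chi> i j. sqrt (p i) * P i j / sqrt (p j))"

lemma norm_sqrt_p: "norm sqrt_p = 1"
  using p_pos by (simp add: norm_vec_def L2_set_def sqrt_p_def less_imp_le sum_p)

lemma transpose_symmetrized: "transpose symmetrized = symmetrized"
proof -
  have "sqrt (p i) * P i j / sqrt (p j) = sqrt (p j) * P j i / sqrt (p i)" for i j
  proof -
    have "p i * P i j = p j * P j i"
      using reversible by (simp add: reversible_wrt_def)
    then show ?thesis
      using p_pos[of i] p_pos[of j] by (simp add: field_simps) (simp add: mult.assoc[symmetric])
  qed
  then show ?thesis
    by (simp add: symmetrized_def transpose_def vec_eq_iff)
qed

lemma symmetrized_self_adjoint: "(symmetrized *v x) \<bullet> y = x \<bullet> (symmetrized *v y)"
  by (metis dot_lmul_matrix transpose_symmetrized vector_transpose_matrix)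

lemma symmetrized_sqrt_p: "symmetrized *v sqrt_p = sqrt_p"
  using p_pos stochastic
  by (simp add: symmetrized_def sqrt_p_def matrix_vector_mult_def vec_eq_iff stochastic_def
      is_distribution_def flip: sum_distrib_left)

lemma symmetrized_eigenvector:
  assumes "symmetrized *v v = M *\<^sub>R v"
  shows "trans_matrix P *v (\<chi> i. v $ i / sqrt (p i)) = M *\<^sub>R (\<chi> i. v $ i / sqrt (p i))"
proof -
  have "(\<Sum>j\<in>UNIV. P i j * (v $ j / sqrt (p j))) = (symmetrized *v v) $ i / sqrt (p i)" for i
    using p_pos[of i]
    by (simp add: symmetrized_def matrix_vector_mult_def sum_divide_distrib)
  then show ?thesis
    using assms by (simp add: trans_matrix_def matrix_vector_mult_def vec_eq_iff)
qed

definition weighted :: "('S \<Rightarrow> real) \<Rightarrow> real^'S" where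
  "weighted d = (\<chi> s. d s / sqrt (p s))"

lemma symmetrized_weighted:
  "symmetrized *v weighted d = weighted (\<lambda>s. \<Sum>k\<in>UNIV. d k * P k s)"
proof -
  have "sqrt (p s) * P s k / sqrt (p k) * (d k / sqrt (p k)) = d k * P k s / sqrt (p s)" for k s
  proof -
    have "P k s = p s * P s k / p k"
      using reversible p_pos[of k] by (simp add: reversible_wrt_def field_simps)
    then show ?thesis
      using p_pos[of k] p_pos[of s] by (simp add: field_simps)
  qed
  then show ?thesis
    by (simp add: symmetrized_def weighted_def matrix_vector_mult_def vec_eq_iff sum_divide_distrib)
qed

lemma inner_weighted_sqrt_p: "weighted d \<bullet> sqrt_p = (\<Sum>s\<in>UNIV. d s)"
  by (simp add: weighted_def sqrt_p_def inner_vec_def)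

lemma sum_abs_le_norm_weighted: "(\<Sum>s\<in>UNIV. \<bar>d s\<bar>) \<le> norm (weighted d)"
proof -
  have "(\<Sum>s\<in>UNIV. \<bar>d s\<bar>) = sqrt_p \<bullet> (\<chi> s. \<bar>weighted d $ s\<bar>)"
    using p_pos by (simp add: weighted_def sqrt_p_def inner_vec_def abs_div abs_of_pos)
  also have "\<dots> \<le> norm sqrt_p * norm (\<chi> s. \<bar>weighted d $ s\<bar>)"
    by (rule norm_cauchy_schwarz)
  also have "\<dots> = norm (weighted d)"
    unfolding norm_sqrt_p by (simp add: norm_vec_def)
  finally show ?thesis .
qed

lemma norm_weighted_indicator_diff:
  "norm (weighted (\<lambda>s. of_bool (z = s) - of_bool (z' = s))) \<le> sqrt (1 / p z + 1 / p z')"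
proof -
  have "(norm (weighted (\<lambda>s. of_bool (z = s) - of_bool (z' = s))))\<^sup>2
      = (\<Sum>s\<in>UNIV. (of_bool (z = s) - of_bool (z' = s))\<^sup>2 / p s)"
    using p_pos by (simp add: weighted_def norm_vec_def L2_set_def power_divide less_imp_le sum_nonneg)
  also have "\<dots> \<le> (\<Sum>s\<in>UNIV. (of_bool (z = s) + of_bool (z' = s)) / p s)"
    using p_pos by (intro sum_mono divide_right_mono) (auto simp: less_imp_le)
  also have "\<dots> = 1 / p z + 1 / p z'"
    by (simp add: divide_inverse distrib_right sum.distrib)
  finally show ?thesis
    by (simp add: real_le_rsqrt)
qed

lemma quadratic_form_symmetrized_le:
  assumes second_eig: "\<And>\<mu>. is_eigenvalue (trans_matrix P) \<mu> \<Longrightarrow> \<mu> \<noteq> 1 \<Longrightarrow> \<mu> \<le> lam"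
    and "x \<bullet> sqrt_p = 0"
  shows "x \<bullet> (symmetrized *v x) \<le> lam * (x \<bullet> x)"
proof (cases "x = 0")
  case False
  define V where "V = {y. y \<bullet> sqrt_p = 0}"
  have "subspace V"
    unfolding V_def by (rule subspace_hyperplane2)
  moreover have "(\<lambda>y. symmetrized *v y) ` V \<subseteq> V"
    by (auto simp: V_def symmetrized_self_adjoint symmetrized_sqrt_p)
  moreover have "V \<noteq> {0}"
    using assms(2) False by (auto simp: V_def)
  ultimately obtain v M where "v \<in> V" "v \<noteq> 0" and eig: "symmetrized *v v = M *\<^sub>R v"
    and max: "\<And>y. y \<in> V \<Longrightarrow> y \<bullet> (symmetrized *v y) \<le> M * (y \<bullet> y)"
    using self_adjoint_rayleigh_max_eigenvector[of "\<lambda>y. symmetrized *v y" V]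
    by (metis matrix_vector_mul_linear symmetrized_self_adjoint)
  define u where "u = (\<chi> i. v $ i / sqrt (p i))"
  have u_eig: "trans_matrix P *v u = M *\<^sub>R u"
    unfolding u_def by (rule symmetrized_eigenvector[OF eig])
  have "u \<noteq> 0"
    using \<open>v \<noteq> 0\<close> by (auto simp: u_def vec_eq_iff)
  have "M \<noteq> 1"
  proof
    assume "M = 1"
    then have "(\<Sum>j\<in>UNIV. P i j * u $ j) = u $ i" for i
      using u_eig by (simp add: trans_matrix_def matrix_vector_mult_def vec_eq_iff)
    then obtain c where c: "\<And>i. u $ i = c"
      using harmonic_const[OF stochastic irreducible, of "\<lambda>j. u $ j"] by metis
    have "v = c *\<^sub>R sqrt_p"
      using c by (simp add: u_def sqrt_p_def vec_eq_iff field_simps)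
    then have "c = v \<bullet> sqrt_p"
      using norm_sqrt_p by (simp add: dot_square_norm)
    then have "c = 0"
      using \<open>v \<in> V\<close> by (simp add: V_def)
    then show False
      using c \<open>u \<noteq> 0\<close> by (simp add: vec_eq_iff)
  qed
  then have "M \<le> lam"
    using second_eig u_eig \<open>u \<noteq> 0\<close> by (auto simp: is_eigenvalue_def)
  then show ?thesis
    using max[of x] assms(2) by (simp add: V_def) (meson inner_ge_zero mult_right_mono order_trans)
qed simp

lemma resolvent_norm_le:
  assumes second_eig: "\<And>\<mu>. is_eigenvalue (trans_matrix P) \<mu> \<Longrightarrow> \<mu> \<noteq> 1 \<Longrightarrow> \<mu> \<le> lam"
    and "0 \<le> \<gamma>" "\<gamma> * lam < 1"
    and y: "y = h + \<gamma> *\<^sub>R (symmetrized *v y)" and "y \<bullet> sqrt_p = 0"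
  shows "(1 - \<gamma> * lam) * norm y \<le> norm h"
proof -
  have "y \<bullet> y = y \<bullet> h + \<gamma> * (y \<bullet> (symmetrized *v y))"
    by (subst (2) y) (simp add: inner_add_right)
  also have "\<dots> \<le> norm y * norm h + \<gamma> * (lam * (y \<bullet> y))"
    using quadratic_form_symmetrized_le[OF second_eig \<open>y \<bullet> sqrt_p = 0\<close>] \<open>0 \<le> \<gamma>\<close>
    by (intro add_mono norm_cauchy_schwarz mult_left_mono)
  finally have "(1 - \<gamma> * lam) * norm y * norm y \<le> norm h * norm y"
    by (simp add: dot_square_norm power2_eq_square algebra_simps)
  then show ?thesis
    by (cases "norm y = 0") (auto simp: mult_le_cancel_right)
qed

lemma tv_diff_le:
  assumes second_eig: "\<And>\<mu>. is_eigenvalue (trans_matrix P) \<mu> \<Longrightarrow> \<mu> \<noteq> 1 \<Longrightarrow> \<mu> \<le> lam"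
    and "0 \<le> \<gamma>" "\<gamma> < 1" "\<gamma> * lam < 1"
  shows "2 * tv_diff P \<gamma> z z' \<le> (1 - \<gamma>) / (1 - \<gamma> * lam) * sqrt (1 / p z + 1 / p z')"
proof -
  define d where "d s = occupation P \<gamma> z s - occupation P \<gamma> z' s" for s
  define h where "h = weighted (\<lambda>s. of_bool (z = s) - of_bool (z' = s))"
  have "weighted d $ s = (1 - \<gamma>) * h $ s + \<gamma> * weighted (\<lambda>s. \<Sum>k\<in>UNIV. d k * P k s) $ s" for s
    using occupation_diff_eq[OF stochastic \<open>0 \<le> \<gamma>\<close> \<open>\<gamma> < 1\<close>, of z s z']
    by (simp add: weighted_def h_def d_def add_divide_distrib)
  then have "weighted d = (1 - \<gamma>) *\<^sub>R h + \<gamma> *\<^sub>R (symmetrized *v weighted d)"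
    by (simp add: symmetrized_weighted vec_eq_iff)
  moreover have "weighted d \<bullet> sqrt_p = 0"
    using sum_occupation[OF stochastic \<open>0 \<le> \<gamma>\<close> \<open>\<gamma> < 1\<close>]
    by (simp add: inner_weighted_sqrt_p d_def sum_subtractf)
  ultimately have "(1 - \<gamma> * lam) * norm (weighted d) \<le> norm ((1 - \<gamma>) *\<^sub>R h)"
    using resolvent_norm_le[OF second_eig \<open>0 \<le> \<gamma>\<close> \<open>\<gamma> * lam < 1\<close>] by blast
  then have "norm (weighted d) \<le> (1 - \<gamma>) / (1 - \<gamma> * lam) * norm h"
    unfolding norm_scaleR using \<open>\<gamma> < 1\<close> \<open>\<gamma> * lam < 1\<close> by (simp add: field_simps)
  also have "\<dots> \<le> (1 - \<gamma>) / (1 - \<gamma> * lam) * sqrt (1 / p z + 1 / p z')"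
    unfolding h_def using \<open>\<gamma> < 1\<close> \<open>\<gamma> * lam < 1\<close>
    by (intro mult_left_mono norm_weighted_indicator_diff) auto
  finally show ?thesis
    using sum_abs_le_norm_weighted[of d] by (simp add: tv_diff_def d_def)
qed

lemma tv_diff_le_eps:
  assumes second_eig: "\<And>\<mu>. is_eigenvalue (trans_matrix P) \<mu> \<Longrightarrow> \<mu> \<noteq> 1 \<Longrightarrow> \<mu> \<le> lam"
    and "lam < 1" "0 < \<gamma>" "\<gamma> < 1" "0 < eps" "0 \<le> m" and m_le: "\<And>s. m \<le> p s"
    and \<gamma>_ge: "(1 - m * eps) / (1 - lam * m * eps) \<le> \<gamma>"
  shows "tv_diff P \<gamma> z z' \<le> eps"
proof -
  have "m \<noteq> 0"
    using \<gamma>_ge \<open>\<gamma> < 1\<close> by auto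
  then have "0 < m"
    using \<open>0 \<le> m\<close> by simp
  have "\<gamma> * lam < 1"
    using assms(2-4) by (intro mult_less_1_of_le_1) auto
  have ratio: "(1 - \<gamma>) / (1 - \<gamma> * lam) \<le> m * eps"
    using assms(2-5) \<gamma>_ge \<open>\<gamma> * lam < 1\<close> \<open>0 < m\<close>
    by (intro discount_ratio_le) (auto simp: mult.assoc)
  have root: "sqrt (1 / p z + 1 / p z') \<le> 2 / m"
  proof (rule real_le_lsqrt)
    have "1 / p s \<le> 1 / m" for s
      using m_le[of s] \<open>0 < m\<close> by (intro divide_left_mono) auto
    then have "1 / p z + 1 / p z' \<le> 2 / m"
      using add_mono[of "1 / p z" "1 / m" "1 / p z'" "1 / m"] by simp
    also have "\<dots> \<le> (2 / m)\<^sup>2"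
      using \<open>0 < m\<close> m_le[of z] p_le_1[of z] by (simp add: power2_eq_square field_simps)
    finally show "1 / p z + 1 / p z' \<le> (2 / m)\<^sup>2" .
  qed (use \<open>0 < m\<close> in simp)
  have "2 * tv_diff P \<gamma> z z' \<le> (1 - \<gamma>) / (1 - \<gamma> * lam) * sqrt (1 / p z + 1 / p z')"
    using second_eig \<open>0 < \<gamma>\<close> \<open>\<gamma> < 1\<close> \<open>\<gamma> * lam < 1\<close> by (intro tv_diff_le) auto
  also have "\<dots> \<le> (m * eps) * (2 / m)"
    using ratio root \<open>\<gamma> < 1\<close> \<open>\<gamma> * lam < 1\<close> \<open>0 < m\<close> \<open>0 < eps\<close>
      p_pos[of z] p_pos[of z']
    by (intro mult_mono) auto
  also have "\<dots> = 2 * eps"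
    using \<open>0 < m\<close> by simp
  finally show ?thesis
    by simp
qed

end

theorem proposition3:
  fixes T :: "'S::finite \<Rightarrow> 'A::finite \<Rightarrow> 'S \<Rightarrow> real"
    and Pols :: "('S \<Rightarrow> 'A \<Rightarrow> real) set"
    and lam eps \<gamma> :: real
  assumes T_kernel: "\<forall>s a. is_distribution (T s a)"
    and Pi_policies: "\<forall>pol\<in>Pols. \<forall>s. is_distribution (pol s)"
    and ergodic: "\<forall>pol\<in>Pols. ergodic_chain (induced_chain T pol)"
    and reversible: "\<forall>pol\<in>Pols. reversible_wrt (induced_chain T pol)
                                 (stationary_dist (induced_chain T pol))"
    and lam_lt1: "lam < 1"
    and second_eig: "\<forall>pol\<in>Pols. \<forall>\<mu>. is_eigenvalue (trans_matrix (induced_chain T pol)) \<mu>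
                                    \<and> \<mu> \<noteq> 1 \<longrightarrow> \<mu> \<le> lam"
    and eps_pos: "eps > 0"
    and gamma: "0 < \<gamma>" "\<gamma> < 1"
    and gamma_bound:
      "\<gamma> \<ge> (1 - (INF q\<in>{(pol, s). pol \<in> Pols}. stationary_dist (induced_chain T (fst q)) (snd q)) * eps)
          / (1 - lam * (INF q\<in>{(pol, s). pol \<in> Pols}. stationary_dist (induced_chain T (fst q)) (snd q)) * eps)"
  shows "\<forall>pol\<in>Pols. \<forall>z z'. tv_diff (induced_chain T pol) \<gamma> z z' \<le> eps"
proof (intro ballI allI)
  fix pol z z'
  assume "pol \<in> Pols"
  let ?p = "\<lambda>q. stationary_dist (induced_chain T (fst q)) (snd q)"
  define m where "m = (INF q\<in>{(pol, s). pol \<in> Pols}. ?p q)"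
  have policy_stationary: "is_stationary (induced_chain T pl) (stationary_dist (induced_chain T pl))"
    if "pl \<in> Pols" for pl
    using ergodic that by (intro is_stationary_stationary_dist) (auto simp: ergodic_chain_def)
  then have p_nonneg: "0 \<le> ?p q" if "q \<in> {(pol, s). pol \<in> Pols}" for q
    using that by (auto simp: is_stationary_def is_distribution_def)
  then have "bdd_below (?p ` {(pol, s). pol \<in> Pols})"
    by (intro bdd_belowI[of _ 0]) auto
  then have m_le: "m \<le> stationary_dist (induced_chain T pol) s" for s
    unfolding m_def using cINF_lower[of ?p _ "(pol, s)"] \<open>pol \<in> Pols\<close> by simp
  have "0 \<le> m"
    unfolding m_def using \<open>pol \<in> Pols\<close> p_nonneg by (intro cINF_greatest) auto
  interpret reversible_chain "induced_chain T pol" "stationary_dist (induced_chain T pol)"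
    using ergodic reversible policy_stationary \<open>pol \<in> Pols\<close>
    by unfold_locales (auto simp: ergodic_chain_def)
  show "tv_diff (induced_chain T pol) \<gamma> z z' \<le> eps"
    using second_eig \<open>pol \<in> Pols\<close> lam_lt1 gamma eps_pos \<open>0 \<le> m\<close> m_le gamma_bound
    by (intro tv_diff_le_eps[of lam \<gamma> eps m]) (auto simp: m_def)
qed

end
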